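(* Let $q\ge2$ and let $U$ be a $q\times q$ row-stochastic matrix with strictly positive entries. There is a constant $C_3$ independent of $n$ such that for all sufficiently large $n$, every $\mathbf{x}\in[1:q]^n$ and every $a\ne b\in[1:q]$, $$d_{\mathrm{TV}}\big(W_{(\mathbf{x},a)},W_{(\mathbf{x},b)}\big)\le\frac{C_3(\log n)^{(q-2)/2}}{\sqrt n}.$$
   Context: For a vector $\mathbf{x}\in[1:q]^m$, $W_{\mathbf{x}}$ denotes the distribution of the composition $(N(1|\mathbf{Y}),\dots,N(q|\mathbf{Y}))$, $N(c|\mathbf{Y})=|\{i:Y_i=c\}|$, of the output $\mathbf{Y}$ when $\mathbf{x}$ is sent through $m$ independent uses of the DMC $U$ (i.e. $\Pr[\mathbf{Y}=\mathbf{y}]=\prod_iU(y_i|x_i)$). $(\mathbf{x},a)\in[1:q]^{n+1}$ denotes $\mathbf{x}$ with the symbol $a$ appended. $d_{\mathrm{TV}}(P,Q)=\frac12\sum|P-Q|$. Logarithms base 2. *)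

theory Defs
  imports Complex_Main
begin

text \<open>A channel U is a function U :: nat => nat => real,
  U i j = U(j|i) = probability of output j given input i (row-stochastic matrix).\<close>

definition words :: "nat \<Rightarrow> nat \<Rightarrow> nat list set" where
  "words q m = {ys. length ys = m \<and> set ys \<subseteq> {1..q}}"

definition composition :: "nat list \<Rightarrow> nat \<Rightarrow> nat" where
  "composition ys = (\<lambda>c. length (filter (\<lambda>y. y = c) ys))"

definition out_prob :: "(nat \<Rightarrow> nat \<Rightarrow> real) \<Rightarrow> nat list \<Rightarrow> nat list \<Rightarrow> real" where
  "out_prob U xs ys = (\<Prod>i<length xs. U (xs ! i) (ys ! i))"

definition W :: "nat \<Rightarrow> (nat \<Rightarrow> nat \<Rightarrow> real) \<Rightarrow> nat list \<Rightarrow> (nat \<Rightarrow> nat) \<Rightarrow> real" where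
  "W q U xs c = (\<Sum>ys\<in>{ys \<in> words q (length xs). composition ys = c}. out_prob U xs ys)"

text \<open>Total variation distance between W_xs and W_xs' (inputs of equal length m);
  the sum ranges over all possible compositions of length-m output words.\<close>
definition dTV_W :: "nat \<Rightarrow> (nat \<Rightarrow> nat \<Rightarrow> real) \<Rightarrow> nat list \<Rightarrow> nat list \<Rightarrow> real" where
  "dTV_W q U xs xs' = 1/2 * (\<Sum>c\<in>composition ` words q (length xs). \<bar>W q U xs c - W q U xs' c\<bar>)"

end

theory Submission
  imports Defs "HOL-Analysis.Convex"
begin

text \<open>View a distribution of compositions as a finitely supported function on \<open>nat \<Rightarrow> nat\<close>,
  and let \<open>t c\<close> (\<open>translate c\<close> below) shift it by the unit vector \<open>e c\<close>. Appending the
  input symbol \<open>a\<close> applies the mixture \<open>\<Sum>y. U a y \<cdot> t y\<close> (\<open>mix\<close>), and all such operators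
  commute. As the rows of \<open>U\<close> sum to 1, \<open>W (x @ [a]) - W (x @ [b])\<close> is a combination of the
  differences \<open>(t y - t 1) (W x)\<close> with total weight at most 2, so it suffices to bound
  \<open>\<parallel>(t i - t j) (W x)\<parallel>\<^sub>1\<close> for \<open>i \<noteq> j\<close>.

  If \<open>d\<close> is the least entry of \<open>U\<close>, every row splits as \<open>d (t i + t j) + R a\<close> with \<open>R a\<close> a
  nonnegative mixture of total weight \<open>1 - 2d\<close>. Expanding the product over the \<open>n\<close> symbols of
  \<open>x\<close> bounds \<open>\<parallel>(t i - t j) (W x)\<parallel>\<^sub>1\<close> by the expectation of
  \<open>\<parallel>(t i + t j)^L (t i - t j) \<delta>\<^sub>0\<parallel>\<^sub>1 / 2^L\<close> for \<open>L ~ Bin(n, 2d)\<close>. That norm is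
  \<open>\<Sum>k. \<bar>C(l, k - 1) - C(l, k)\<bar> \<le> 2^(l+1) / \<surd>(l+1)\<close>, a mean absolute deviation of a symmetric
  binomial, and Cauchy-Schwarz gives \<open>E (1 / \<surd>(L+1)) \<le> 1 / \<surd>((n+1) 2d)\<close>. So the distance is
  \<open>O(1 / \<surd>n)\<close>.\<close>

definition fin_supp :: "('a \<Rightarrow> real) \<Rightarrow> bool" where
  "fin_supp f \<longleftrightarrow> finite {x. f x \<noteq> 0}"

definition l1_norm :: "('a \<Rightarrow> real) \<Rightarrow> real" where
  "l1_norm f = (\<Sum>x | f x \<noteq> 0. \<bar>f x\<bar>)"

lemma l1_norm_eq_sum:
  assumes "finite A" "\<And>x. x \<notin> A \<Longrightarrow> f x = 0"
  shows "l1_norm f = (\<Sum>x\<in>A. \<bar>f x\<bar>)"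
  unfolding l1_norm_def by (rule sum.mono_neutral_left) (use assms in auto)

lemma l1_norm_nonneg: "l1_norm f \<ge> 0"
  unfolding l1_norm_def by (simp add: sum_nonneg)

lemma l1_norm_zero [simp]: "l1_norm (\<lambda>x. 0) = 0"
  unfolding l1_norm_def by simp

lemma l1_norm_scale: "l1_norm (\<lambda>x. k * f x) = \<bar>k\<bar> * l1_norm f"
proof (cases "k = 0")
  case False
  then have "{x. k * f x \<noteq> 0} = {x. f x \<noteq> 0}" by auto
  then show ?thesis unfolding l1_norm_def by (simp add: sum_distrib_left abs_mult)
qed simp

lemma fin_supp_add: "fin_supp f \<Longrightarrow> fin_supp g \<Longrightarrow> fin_supp (\<lambda>x. f x + g x)"
  unfolding fin_supp_def by (rule finite_subset[of _ "{x. f x \<noteq> 0} \<union> {x. g x \<noteq> 0}"]) auto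

lemma fin_supp_scale: "fin_supp f \<Longrightarrow> fin_supp (\<lambda>x. k * f x)"
  unfolding fin_supp_def by (rule finite_subset[of _ "{x. f x \<noteq> 0}"]) auto

lemma fin_supp_sum:
  "finite I \<Longrightarrow> (\<And>i. i \<in> I \<Longrightarrow> fin_supp (F i)) \<Longrightarrow> fin_supp (\<lambda>x. \<Sum>i\<in>I. F i x)"
proof (induction I rule: finite_induct)
  case empty
  then show ?case by (simp add: fin_supp_def)
next
  case (insert a I)
  then show ?case using fin_supp_add[of "F a" "\<lambda>x. \<Sum>i\<in>I. F i x"] by simp
qed

lemma l1_norm_add_le:
  assumes "fin_supp f" "fin_supp g"
  shows "l1_norm (\<lambda>x. f x + g x) \<le> l1_norm f + l1_norm g"
proof -
  let ?S = "{x. f x \<noteq> 0} \<union> {x. g x \<noteq> 0}"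
  have fin: "finite ?S" using assms by (auto simp: fin_supp_def)
  have "l1_norm (\<lambda>x. f x + g x) = (\<Sum>x\<in>?S. \<bar>f x + g x\<bar>)"
    by (rule l1_norm_eq_sum[OF fin]) auto
  also have "\<dots> \<le> (\<Sum>x\<in>?S. \<bar>f x\<bar>) + (\<Sum>x\<in>?S. \<bar>g x\<bar>)"
    unfolding sum.distrib[symmetric] by (rule sum_mono) (rule abs_triangle_ineq)
  also have "\<dots> = l1_norm f + l1_norm g"
    using l1_norm_eq_sum[OF fin, of f] l1_norm_eq_sum[OF fin, of g] by simp
  finally show ?thesis .
qed

lemma l1_norm_sum_le:
  "finite I \<Longrightarrow> (\<And>i. i \<in> I \<Longrightarrow> fin_supp (F i)) \<Longrightarrow>
    l1_norm (\<lambda>x. \<Sum>i\<in>I. F i x) \<le> (\<Sum>i\<in>I. l1_norm (F i))"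
proof (induction I rule: finite_induct)
  case (insert a I)
  then have "l1_norm (\<lambda>x. \<Sum>i\<in>insert a I. F i x) \<le> l1_norm (F a) + l1_norm (\<lambda>x. \<Sum>i\<in>I. F i x)"
    using l1_norm_add_le[of "F a" "\<lambda>x. \<Sum>i\<in>I. F i x"] fin_supp_sum[of I F] by simp
  with insert show ?case by simp
qed simp

definition translate :: "'a \<Rightarrow> (('a \<Rightarrow> nat) \<Rightarrow> real) \<Rightarrow> ('a \<Rightarrow> nat) \<Rightarrow> real" where
  "translate c f = (\<lambda>x. if 0 < x c then f (x(c := x c - 1)) else 0)"

definition delta0 :: "('a \<Rightarrow> nat) \<Rightarrow> real" where
  "delta0 x = (if x = (\<lambda>_. 0) then 1 else 0)"

lemma fin_supp_delta0: "fin_supp delta0"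
  unfolding fin_supp_def delta0_def by (rule finite_subset[of _ "{\<lambda>_. 0}"]) auto

lemma l1_norm_delta0: "l1_norm delta0 = 1"
  by (subst l1_norm_eq_sum[of "{\<lambda>_. 0}"]) (auto simp: delta0_def)

lemma support_translate:
  "{x. translate c f x \<noteq> 0} = (\<lambda>y. y(c := Suc (y c))) ` {x. f x \<noteq> 0}"
proof (intro set_eqI iffI)
  fix x assume "x \<in> {x. translate c f x \<noteq> 0}"
  then have "0 < x c" "f (x(c := x c - 1)) \<noteq> 0" by (auto simp: translate_def split: if_splits)
  moreover have "x = (x(c := x c - 1))(c := Suc ((x(c := x c - 1)) c))" using \<open>0 < x c\<close> by auto
  ultimately show "x \<in> (\<lambda>y. y(c := Suc (y c))) ` {x. f x \<noteq> 0}" by blast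
qed (auto simp: translate_def)

lemma inj_fun_upd_Suc: "inj (\<lambda>y :: 'a \<Rightarrow> nat. y(c := Suc (y c)))"
  unfolding inj_def fun_eq_iff by (metis fun_upd_apply nat.inject)

lemma l1_norm_translate: "l1_norm (translate c f) = l1_norm f"
proof -
  have "l1_norm (translate c f) = (\<Sum>y | f y \<noteq> 0. \<bar>translate c f (y(c := Suc (y c)))\<bar>)"
    unfolding l1_norm_def support_translate
    by (rule sum.reindex[OF inj_on_subset[OF inj_fun_upd_Suc subset_UNIV], unfolded comp_def])
  also have "\<dots> = l1_norm f" unfolding l1_norm_def by (rule sum.cong) (auto simp: translate_def)
  finally show ?thesis .
qed

lemma fin_supp_translate: "fin_supp f \<Longrightarrow> fin_supp (translate c f)"
  unfolding fin_supp_def support_translate by simp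

lemma translate_commute: "translate c (translate d f) = translate d (translate c f)"
  unfolding translate_def by (cases "c = d") (auto simp: fun_eq_iff fun_upd_twist)

lemma translate_add: "translate c (\<lambda>x. f x + g x) = (\<lambda>x. translate c f x + translate c g x)"
  unfolding translate_def by auto

lemma translate_diff: "translate c (\<lambda>x. f x - g x) = (\<lambda>x. translate c f x - translate c g x)"
  unfolding translate_def by auto

lemma translate_sum: "translate c (\<lambda>x. \<Sum>i\<in>I. F i x) = (\<lambda>x. \<Sum>i\<in>I. translate c (F i) x)"
  unfolding translate_def by auto

lemma translate_scale: "translate c (\<lambda>x. k * f x) = (\<lambda>x. k * translate c f x)"
  unfolding translate_def by auto

lemma l1_norm_funpow_translate: "l1_norm ((translate c ^^ k) f) = l1_norm f"
  by (induction k) (auto simp: l1_norm_translate)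

lemma fin_supp_funpow_translate: "fin_supp f \<Longrightarrow> fin_supp ((translate c ^^ k) f)"
  by (induction k) (auto simp: fin_supp_translate)

lemma translate_funpow_commute: "translate d ((translate c ^^ k) f) = (translate c ^^ k) (translate d f)"
  by (induction k) (auto simp: translate_commute)

definition mix :: "'a set \<Rightarrow> ('a \<Rightarrow> real) \<Rightarrow> (('a \<Rightarrow> nat) \<Rightarrow> real) \<Rightarrow> ('a \<Rightarrow> nat) \<Rightarrow> real" where
  "mix Y w f = (\<lambda>x. \<Sum>y\<in>Y. w y * translate y f x)"

lemma fin_supp_mix: "finite Y \<Longrightarrow> fin_supp f \<Longrightarrow> fin_supp (mix Y w f)"
  unfolding mix_def by (intro fin_supp_sum fin_supp_scale fin_supp_translate)

lemma l1_norm_mix_le: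
  assumes "finite Y" "fin_supp f"
  shows "l1_norm (mix Y w f) \<le> (\<Sum>y\<in>Y. \<bar>w y\<bar>) * l1_norm f"
proof -
  have "l1_norm (mix Y w f) \<le> (\<Sum>y\<in>Y. l1_norm (\<lambda>x. w y * translate y f x))"
    unfolding mix_def using assms by (intro l1_norm_sum_le fin_supp_scale fin_supp_translate)
  also have "\<dots> = (\<Sum>y\<in>Y. \<bar>w y\<bar>) * l1_norm f"
    by (simp add: l1_norm_scale l1_norm_translate sum_distrib_right)
  finally show ?thesis .
qed

lemma translate_mix: "translate c (mix Y w f) = mix Y w (translate c f)"
  unfolding mix_def translate_sum translate_scale by (simp add: translate_commute)

lemma finite_words: "finite (words q m)"
proof -
  have "words q m = {ys. set ys \<subseteq> {1..q} \<and> length ys = m}" by (auto simp: words_def)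
  then show ?thesis by (simp add: finite_lists_length_eq)
qed

lemma words_Suc: "words q (Suc n) = (\<lambda>(zs, y). zs @ [y]) ` (words q n \<times> {1..q})"
proof (intro set_eqI iffI)
  fix ys assume "ys \<in> words q (Suc n)"
  then have len: "length ys = Suc n" and set: "set ys \<subseteq> {1..q}" by (auto simp: words_def)
  then have "ys \<noteq> []" by auto
  then have "ys = butlast ys @ [last ys]" "last ys \<in> set ys" by simp_all
  moreover have "set (butlast ys) \<subseteq> {1..q}" using set by (meson in_set_butlastD subset_iff)
  ultimately show "ys \<in> (\<lambda>(zs, y). zs @ [y]) ` (words q n \<times> {1..q})"
    using len set by (force simp: words_def)
qed (auto simp: words_def)

lemma out_prob_snoc:
  assumes "length zs = length xs"
  shows "out_prob U (xs @ [a]) (zs @ [y]) = out_prob U xs zs * U a y"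
proof -
  have "(\<Prod>i<length xs. U ((xs @ [a]) ! i) ((zs @ [y]) ! i)) = out_prob U xs zs"
    unfolding out_prob_def using assms by (auto simp: nth_append intro!: prod.cong)
  then show ?thesis using assms by (simp add: out_prob_def nth_append)
qed

lemma composition_snoc_eq:
  "composition (zs @ [y]) = c \<longleftrightarrow> 0 < c y \<and> composition zs = c(y := c y - 1)"
  by (auto simp: composition_def fun_eq_iff split: if_splits)

lemma W_eq_sum_if:
  "W q U xs c = (\<Sum>ys\<in>words q (length xs). if composition ys = c then out_prob U xs ys else 0)"
  unfolding W_def by (simp add: sum.inter_filter[OF finite_words])

lemma W_Nil: "W q U [] = delta0"
proof
  fix c
  have "words q 0 = {[]}" by (auto simp: words_def)
  then show "W q U [] c = delta0 c"
    by (auto simp: W_eq_sum_if delta0_def out_prob_def composition_def)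
qed

lemma W_snoc: "W q U (xs @ [a]) = mix {1..q} (U a) (W q U xs)"
proof
  fix c
  let ?n = "length xs"
  have "W q U (xs @ [a]) c = (\<Sum>(zs, y)\<in>words q ?n \<times> {1..q}.
      if composition (zs @ [y]) = c then out_prob U xs zs * U a y else 0)"
    unfolding W_eq_sum_if length_append_singleton words_Suc
    by (subst sum.reindex) (auto simp: inj_on_def out_prob_snoc words_def intro!: sum.cong)
  also have "\<dots> = (\<Sum>y\<in>{1..q}. \<Sum>zs\<in>words q ?n.
      if composition (zs @ [y]) = c then out_prob U xs zs * U a y else 0)"
    by (subst sum.cartesian_product[symmetric]) (rule sum.swap)
  also have "\<dots> = mix {1..q} (U a) (W q U xs) c"
    unfolding mix_def composition_snoc_eq translate_def W_eq_sum_if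
    by (auto simp: sum_distrib_left intro!: sum.cong)
  finally show "W q U (xs @ [a]) c = mix {1..q} (U a) (W q U xs) c" .
qed

lemma W_eq_0: "c \<notin> composition ` words q (length xs) \<Longrightarrow> W q U xs c = 0"
  unfolding W_def by (rule sum.neutral) auto

lemma fin_supp_W: "fin_supp (W q U xs)"
  unfolding fin_supp_def
  by (rule finite_subset[of _ "composition ` words q (length xs)"]) (use finite_words W_eq_0 in blast)+

lemma dTV_W_eq_l1_norm:
  assumes "length xs = length xs'"
  shows "dTV_W q U xs xs' = l1_norm (\<lambda>c. W q U xs c - W q U xs' c) / 2"
  unfolding dTV_W_def using assms
  by (subst l1_norm_eq_sum[of "composition ` words q (length xs)"]) (auto simp: finite_words W_eq_0)

definition translate_plus :: "'a \<Rightarrow> 'a \<Rightarrow> (('a \<Rightarrow> nat) \<Rightarrow> real) \<Rightarrow> ('a \<Rightarrow> nat) \<Rightarrow> real" where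
  "translate_plus i j f = (\<lambda>x. translate i f x + translate j f x)"

definition translate_minus :: "'a \<Rightarrow> 'a \<Rightarrow> (('a \<Rightarrow> nat) \<Rightarrow> real) \<Rightarrow> ('a \<Rightarrow> nat) \<Rightarrow> real" where
  "translate_minus i j f = (\<lambda>x. translate i f x - translate j f x)"

lemma fin_supp_translate_plus: "fin_supp f \<Longrightarrow> fin_supp (translate_plus i j f)"
  unfolding translate_plus_def by (intro fin_supp_add fin_supp_translate)

lemma fin_supp_translate_minus: "fin_supp f \<Longrightarrow> fin_supp (translate_minus i j f)"
  unfolding translate_minus_def fin_supp_def
  by (rule finite_subset[of _ "{x. translate i f x \<noteq> 0} \<union> {x. translate j f x \<noteq> 0}"])
    (auto simp: fin_supp_translate[unfolded fin_supp_def])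

lemma fin_supp_funpow_translate_plus: "fin_supp f \<Longrightarrow> fin_supp ((translate_plus i j ^^ m) f)"
  by (induction m) (auto simp: fin_supp_translate_plus)

lemma mix_add: "mix Y w (\<lambda>x. f x + g x) = (\<lambda>x. mix Y w f x + mix Y w g x)"
  by (simp add: mix_def translate_add distrib_left sum.distrib)

lemma mix_diff: "mix Y w (\<lambda>x. f x - g x) = (\<lambda>x. mix Y w f x - mix Y w g x)"
  by (simp add: mix_def translate_diff right_diff_distrib sum_subtractf)

lemma mix_weights_diff: "(\<lambda>x. mix Y v f x - mix Y w f x) = mix Y (\<lambda>y. v y - w y) f"
  by (simp add: mix_def left_diff_distrib sum_subtractf)

lemma translate_plus_mix: "translate_plus i j (mix Y w f) = mix Y w (translate_plus i j f)"
  by (simp add: translate_plus_def translate_mix mix_add)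

lemma translate_minus_mix: "translate_minus i j (mix Y w f) = mix Y w (translate_minus i j f)"
  by (simp add: translate_minus_def translate_mix mix_diff)

lemma funpow_translate_plus_mix:
  "(translate_plus i j ^^ m) (mix Y w f) = mix Y w ((translate_plus i j ^^ m) f)"
  by (induction m) (auto simp: translate_plus_mix)

lemma funpow_translate_plus_minus:
  "(translate_plus i j ^^ m) (translate_minus i j f) = translate_minus i j ((translate_plus i j ^^ m) f)"
proof (induction m)
  case (Suc m)
  have "translate_plus i j (translate_minus i j g) = translate_minus i j (translate_plus i j g)" for g
    unfolding translate_plus_def translate_minus_def translate_add translate_diff
    by (simp add: translate_commute[of i j])
  with Suc show ?case by simp
qed simp

lemma mix_split_pair:
  assumes "finite Y" "i \<in> Y" "j \<in> Y" "i \<noteq> j"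
  shows "mix Y w f x = d * translate_plus i j f x + mix Y (\<lambda>y. w y - (if y \<in> {i, j} then d else 0)) f x"
proof -
  have "mix Y w f x = mix Y (\<lambda>y. w y - (if y \<in> {i, j} then d else 0)) f x
      + (\<Sum>y\<in>Y. if y \<in> {i, j} then d * translate y f x else 0)"
    unfolding mix_def sum.distrib[symmetric] by (rule sum.cong) (auto simp: algebra_simps)
  also have "(\<Sum>y\<in>Y. if y \<in> {i, j} then d * translate y f x else 0) = (\<Sum>y\<in>{i, j}. d * translate y f x)"
    using assms by (intro sum.mono_neutral_cong_right) auto
  also have "\<dots> = d * translate_plus i j f x"
    using assms by (simp add: translate_plus_def distrib_left)
  finally show ?thesis by simp
qed

lemma mix_zero_sum:
  assumes "(\<Sum>y\<in>Y. w y) = 0"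
  shows "mix Y w f = (\<lambda>x. \<Sum>y\<in>Y. w y * translate_minus y c f x)"
proof
  fix x
  have "(\<Sum>y\<in>Y. w y * translate_minus y c f x)
      = mix Y w f x - (\<Sum>y\<in>Y. w y) * translate c f x"
    unfolding mix_def translate_minus_def right_diff_distrib sum_subtractf sum_distrib_right ..
  with assms show "mix Y w f x = (\<Sum>y\<in>Y. w y * translate_minus y c f x)" by simp
qed

lemma sum_Suc_choose_pascal:
  "(\<Sum>k\<le>Suc n. real (Suc n choose k) * F k) = (\<Sum>k\<le>n. real (n choose k) * (F k + F (Suc k)))"
proof -
  have "(\<Sum>k\<le>Suc n. real (Suc n choose k) * F k)
      = F 0 + (\<Sum>k\<le>n. real (n choose Suc k) * F (Suc k)) + (\<Sum>k\<le>n. real (n choose k) * F (Suc k))"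
    by (subst sum.atMost_Suc_shift) (simp add: algebra_simps sum.distrib)
  also have "F 0 + (\<Sum>k\<le>n. real (n choose Suc k) * F (Suc k)) = (\<Sum>k\<le>Suc n. real (n choose k) * F k)"
    by (subst sum.atMost_Suc_shift) simp
  also have "\<dots> = (\<Sum>k\<le>n. real (n choose k) * F k)"
    by simp
  finally show ?thesis
    by (simp add: distrib_left sum.distrib)
qed

lemma funpow_translate_plus_binomial:
  "(translate_plus i j ^^ l) g
     = (\<lambda>x. \<Sum>k\<le>l. real (l choose k) * (translate i ^^ k) ((translate j ^^ (l - k)) g) x)"
proof (induction l)
  case (Suc l)
  have "(translate_plus i j ^^ Suc l) g = translate_plus i j ((translate_plus i j ^^ l) g)"
    by simp
  also have "\<dots> = (\<lambda>x. \<Sum>k\<le>l. real (l choose k) * ((translate i ^^ Suc k) ((translate j ^^ (l - k)) g) x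
      + (translate i ^^ k) ((translate j ^^ Suc (l - k)) g) x))"
    unfolding Suc translate_plus_def translate_sum translate_scale
    by (simp add: translate_funpow_commute sum.distrib algebra_simps)
  also have "\<dots> = (\<lambda>x. \<Sum>k\<le>Suc l.
      real (Suc l choose k) * (translate i ^^ k) ((translate j ^^ (Suc l - k)) g) x)"
    unfolding sum_Suc_choose_pascal by (rule ext, rule sum.cong) (auto simp: Suc_diff_le algebra_simps)
  finally show ?case .
qed simp

text \<open>\<open>pascal_diff l k\<close> is the coefficient of \<open>t i ^ k * t j ^ (l + 1 - k)\<close> in
  \<open>(t i + t j) ^ l * (t i - t j)\<close>.\<close>

definition pascal_diff :: "nat \<Rightarrow> nat \<Rightarrow> real" where
  "pascal_diff l k = (if k = 0 then 0 else real (l choose (k - 1))) - real (l choose k)"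

lemma funpow_translate_plus_minus_expand:
  "(translate_plus i j ^^ l) (translate_minus i j g)
     = (\<lambda>x. \<Sum>k\<le>Suc l. pascal_diff l k * (translate i ^^ k) ((translate j ^^ (Suc l - k)) g) x)"
proof
  fix x
  let ?P = "\<lambda>k. (translate i ^^ k) ((translate j ^^ (Suc l - k)) g) x"
  have "(translate_plus i j ^^ l) (translate_minus i j g) x
      = translate_minus i j ((translate_plus i j ^^ l) g) x"
    by (simp only: funpow_translate_plus_minus)
  also have "\<dots> = (\<Sum>k\<le>l. real (l choose k) * (?P (Suc k) - ?P k))"
    unfolding translate_minus_def funpow_translate_plus_binomial translate_sum translate_scale
    by (auto simp: translate_funpow_commute Suc_diff_le algebra_simps sum_subtractf intro!: sum.cong)
  also have "\<dots> = (\<Sum>k\<le>l. real (l choose k) * ?P (Suc k)) - (\<Sum>k\<le>l. real (l choose k) * ?P k)"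
    by (simp add: right_diff_distrib sum_subtractf)
  also have "(\<Sum>k\<le>l. real (l choose k) * ?P (Suc k))
      = (\<Sum>k\<le>Suc l. (if k = 0 then 0 else real (l choose (k - 1))) * ?P k)"
    by (subst sum.atMost_Suc_shift) simp
  also have "(\<Sum>k\<le>l. real (l choose k) * ?P k) = (\<Sum>k\<le>Suc l. real (l choose k) * ?P k)"
    by simp
  finally show "(translate_plus i j ^^ l) (translate_minus i j g) x
      = (\<Sum>k\<le>Suc l. pascal_diff l k * ?P k)"
    by (simp add: pascal_diff_def left_diff_distrib sum_subtractf)
qed

lemma l1_norm_funpow_translate_plus_minus_le:
  assumes "fin_supp g"
  shows "l1_norm ((translate_plus i j ^^ l) (translate_minus i j g))
    \<le> (\<Sum>k\<le>Suc l. \<bar>pascal_diff l k\<bar>) * l1_norm g"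
proof -
  have "l1_norm ((translate_plus i j ^^ l) (translate_minus i j g))
      \<le> (\<Sum>k\<le>Suc l.
            l1_norm (\<lambda>x. pascal_diff l k * (translate i ^^ k) ((translate j ^^ (Suc l - k)) g) x))"
    unfolding funpow_translate_plus_minus_expand
    using assms by (intro l1_norm_sum_le fin_supp_scale fin_supp_funpow_translate) auto
  also have "\<dots> = (\<Sum>k\<le>Suc l. \<bar>pascal_diff l k\<bar>) * l1_norm g"
    by (simp only: l1_norm_scale l1_norm_funpow_translate sum_distrib_right)
  finally show ?thesis .
qed

lemma pascal_diff_eq:
  assumes "k \<le> Suc l"
  shows "real (Suc l) * pascal_diff l k = real (Suc l choose k) * (2 * real k - real (Suc l))"
proof -
  have "real k * real (Suc l choose k) = real (Suc l) * (if k = 0 then 0 else real (l choose (k - 1)))"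
  proof (cases k)
    case (Suc k')
    have "real (Suc k') * real (Suc l choose Suc k') = real (Suc l) * real (l choose k')"
      by (metis Suc_times_binomial of_nat_mult)
    then show ?thesis using Suc by simp
  qed simp
  moreover have "real (Suc l - k) * real (Suc l choose k) = real (Suc l) * real (l choose k)"
    by (metis binomial_absorb_comp diff_Suc_1 of_nat_mult)
  moreover have "real (Suc l - k) = real (Suc l) - real k"
    using assms by simp
  ultimately show ?thesis
    unfolding pascal_diff_def by (simp add: algebra_simps)
qed

lemma sum_weighted_abs_le_sqrt:
  fixes w x :: "'a \<Rightarrow> real"
  assumes "\<And>i. i \<in> I \<Longrightarrow> 0 \<le> w i"
  shows "(\<Sum>i\<in>I. w i * \<bar>x i\<bar>) \<le> sqrt ((\<Sum>i\<in>I. w i) * (\<Sum>i\<in>I. w i * (x i)\<^sup>2))"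
proof (rule real_le_rsqrt)
  have "(\<Sum>i\<in>I. sqrt (w i) * (sqrt (w i) * \<bar>x i\<bar>))\<^sup>2
      \<le> (\<Sum>i\<in>I. (sqrt (w i))\<^sup>2) * (\<Sum>i\<in>I. (sqrt (w i) * \<bar>x i\<bar>)\<^sup>2)"
    by (rule Cauchy_Schwarz_ineq_sum)
  with assms show "(\<Sum>i\<in>I. w i * \<bar>x i\<bar>)\<^sup>2 \<le> (\<Sum>i\<in>I. w i) * (\<Sum>i\<in>I. w i * (x i)\<^sup>2)"
    by (simp add: power_mult_distrib mult.assoc[symmetric] cong: sum.cong)
qed

lemma sum_choose_real: "(\<Sum>k\<le>n. real (n choose k)) = 2 ^ n"
  by (metis choose_row_sum of_nat_numeral of_nat_power of_nat_sum)

lemma sum_choose_centered_square: "(\<Sum>k\<le>n. real (n choose k) * (2 * real k - real n)\<^sup>2) = real n * 2 ^ n"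
proof (induction n)
  case (Suc n)
  have "(\<Sum>k\<le>Suc n. real (Suc n choose k) * (2 * real k - real (Suc n))\<^sup>2)
      = (\<Sum>k\<le>n. 2 * (real (n choose k) * (2 * real k - real n)\<^sup>2) + 2 * real (n choose k))"
    unfolding sum_Suc_choose_pascal by (rule sum.cong) (simp_all add: power2_eq_square algebra_simps)
  also have "\<dots> = real (Suc n) * 2 ^ Suc n"
    by (simp add: sum.distrib Suc sum_choose_real flip: sum_distrib_left) (simp add: algebra_simps)
  finally show ?case .
qed simp

lemma sum_choose_abs_centered_le: "(\<Sum>k\<le>n. real (n choose k) * \<bar>2 * real k - real n\<bar>) \<le> 2 ^ n * sqrt n"
proof -
  have "(\<Sum>k\<le>n. real (n choose k) * \<bar>2 * real k - real n\<bar>) \<le> sqrt (2 ^ n * (real n * 2 ^ n))"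
    using sum_weighted_abs_le_sqrt[of "{..n}" "\<lambda>k. real (n choose k)" "\<lambda>k. 2 * real k - real n"]
    by (simp add: sum_choose_real sum_choose_centered_square)
  also have "2 ^ n * (real n * 2 ^ n) = (2 ^ n)\<^sup>2 * real n"
    by (simp add: power2_eq_square)
  also have "sqrt \<dots> = 2 ^ n * sqrt n"
    by (simp add: real_sqrt_mult)
  finally show ?thesis .
qed

lemma sum_abs_pascal_diff_le: "(\<Sum>k\<le>Suc l. \<bar>pascal_diff l k\<bar>) \<le> 2 ^ Suc l / sqrt (Suc l)"
proof -
  let ?N = "real (Suc l)"
  have "(\<Sum>k\<le>Suc l. \<bar>pascal_diff l k\<bar>) = (\<Sum>k\<le>Suc l. real (Suc l choose k) * \<bar>2 * real k - ?N\<bar>) / ?N"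
    unfolding sum_divide_distrib
  proof (rule sum.cong)
    fix k assume "k \<in> {..Suc l}"
    then have "pascal_diff l k = real (Suc l choose k) * (2 * real k - ?N) / ?N"
      using pascal_diff_eq[of k l] by (simp add: field_simps del: of_nat_Suc)
    then show "\<bar>pascal_diff l k\<bar> = real (Suc l choose k) * \<bar>2 * real k - ?N\<bar> / ?N"
      by (simp add: abs_mult del: of_nat_Suc)
  qed simp
  also have "\<dots> \<le> 2 ^ Suc l * sqrt ?N / ?N"
    by (rule divide_right_mono[OF sum_choose_abs_centered_le]) simp
  also have "\<dots> = 2 ^ Suc l / sqrt ?N"
    using real_sqrt_mult_self[of ?N] by (simp add: field_simps del: of_nat_Suc real_sqrt_mult_self)
  finally show ?thesis .
qed

lemma l1_norm_funpow_translate_plus_minus_delta0_le: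
  "l1_norm ((translate_plus i j ^^ l) (translate_minus i j delta0)) \<le> 2 ^ Suc l / sqrt (Suc l)"
proof -
  have "l1_norm ((translate_plus i j ^^ l) (translate_minus i j delta0)) \<le> (\<Sum>k\<le>Suc l. \<bar>pascal_diff l k\<bar>)"
    using l1_norm_funpow_translate_plus_minus_le[OF fin_supp_delta0] unfolding l1_norm_delta0 mult_1_right .
  also have "\<dots> \<le> 2 ^ Suc l / sqrt (Suc l)"
    by (rule sum_abs_pascal_diff_le)
  finally show ?thesis .
qed

lemma sum_binomial_weights: "(\<Sum>l\<le>n. real (n choose l) * p ^ l * (1 - p) ^ (n - l)) = (1 :: real)"
  using binomial_ring[of p "1 - p" n] by simp

lemma sum_binomial_weights_div_Suc:
  fixes p :: real
  assumes "0 < p" "p \<le> 1"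
  shows "(\<Sum>l\<le>n. real (n choose l) * p ^ l * (1 - p) ^ (n - l) / real (Suc l)) \<le> 1 / (real (Suc n) * p)"
proof -
  let ?w = "\<lambda>k. real (Suc n choose k) * p ^ k * (1 - p) ^ (Suc n - k)"
  have "(\<Sum>l\<le>n. real (n choose l) * p ^ l * (1 - p) ^ (n - l) / real (Suc l))
      = (\<Sum>l\<le>n. ?w (Suc l)) / (real (Suc n) * p)"
    unfolding sum_divide_distrib
  proof (rule sum.cong)
    fix l
    have "real (Suc l) * real (Suc n choose Suc l) = real (Suc n) * real (n choose l)"
      by (metis Suc_times_binomial of_nat_mult)
    with assms show "real (n choose l) * p ^ l * (1 - p) ^ (n - l) / real (Suc l)
        = ?w (Suc l) / (real (Suc n) * p)"
      by (simp add: field_simps del: of_nat_Suc binomial_Suc_Suc)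
  qed simp
  also have "(\<Sum>l\<le>n. ?w (Suc l)) = 1 - ?w 0"
    using sum.atMost_Suc_shift[of ?w n] sum_binomial_weights[of "Suc n" p] by linarith
  also have "\<dots> \<le> 1"
    using assms by simp
  finally show ?thesis
    using assms by (simp add: divide_right_mono)
qed

lemma sum_binomial_weights_div_sqrt:
  fixes p :: real
  assumes "0 < p" "p \<le> 1"
  shows "(\<Sum>l\<le>n. real (n choose l) * p ^ l * (1 - p) ^ (n - l) / sqrt (Suc l))
    \<le> 1 / sqrt (real (Suc n) * p)"
proof -
  let ?w = "\<lambda>l. real (n choose l) * p ^ l * (1 - p) ^ (n - l)"
  have "(\<Sum>l\<le>n. ?w l / sqrt (Suc l)) = (\<Sum>l\<le>n. ?w l * \<bar>1 / sqrt (Suc l)\<bar>)"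
    by simp
  also have "\<dots> \<le> sqrt ((\<Sum>l\<le>n. ?w l) * (\<Sum>l\<le>n. ?w l * (1 / sqrt (Suc l))\<^sup>2))"
    using assms by (intro sum_weighted_abs_le_sqrt) simp
  also have "\<dots> = sqrt (\<Sum>l\<le>n. ?w l / real (Suc l))"
    by (simp add: sum_binomial_weights power_divide del: of_nat_Suc)
  also have "\<dots> \<le> sqrt (1 / (real (Suc n) * p))"
    using assms by (intro real_sqrt_le_mono sum_binomial_weights_div_Suc)
  finally show ?thesis
    by (simp add: real_sqrt_divide)
qed

lemma binomial_recurrence_bound:
  fixes F :: "'a list \<Rightarrow> nat \<Rightarrow> real"
  assumes "0 \<le> p" "0 \<le> s"
    and step: "\<And>xs a m. a \<in> A \<Longrightarrow> F (xs @ [a]) m \<le> p * F xs (Suc m) + s * F xs m"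
    and "set xs \<subseteq> A"
  shows "F xs m \<le> (\<Sum>l\<le>length xs. real (length xs choose l) * p ^ l * s ^ (length xs - l) * F [] (m + l))"
  using \<open>set xs \<subseteq> A\<close>
proof (induction xs arbitrary: m rule: rev_induct)
  case (snoc a xs)
  let ?n = "length xs"
  let ?S = "\<lambda>m. \<Sum>l\<le>?n. real (?n choose l) * p ^ l * s ^ (?n - l) * F [] (m + l)"
  have "F (xs @ [a]) m \<le> p * F xs (Suc m) + s * F xs m"
    using snoc.prems by (intro step) simp
  also have "\<dots> \<le> p * ?S (Suc m) + s * ?S m"
    using snoc.IH[of "Suc m"] snoc.IH[of m] snoc.prems assms(1,2) by (intro add_mono mult_left_mono) auto
  also have "\<dots> = (\<Sum>l\<le>Suc ?n. real (Suc ?n choose l) * (p ^ l * s ^ (Suc ?n - l) * F [] (m + l)))"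
    unfolding sum_Suc_choose_pascal sum_distrib_left sum.distrib[symmetric]
    by (rule sum.cong) (auto simp: Suc_diff_le algebra_simps)
  finally show ?case
    by (simp add: mult.assoc)
qed simp

locale channel =
  fixes q :: nat and U :: "nat \<Rightarrow> nat \<Rightarrow> real"
  assumes nonneg: "\<And>a c. a \<in> {1..q} \<Longrightarrow> c \<in> {1..q} \<Longrightarrow> 0 \<le> U a c"
    and row_sum: "\<And>a. a \<in> {1..q} \<Longrightarrow> (\<Sum>c=1..q. U a c) = 1"
begin

lemma l1_norm_translate_minus_W_snoc_le:
  assumes ij: "i \<in> {1..q}" "j \<in> {1..q}" "i \<noteq> j"
    and a: "a \<in> {1..q}" and d: "0 \<le> d" "d \<le> U a i" "d \<le> U a j"
  shows "l1_norm ((translate_plus i j ^^ m) (translate_minus i j (W q U (xs @ [a]))))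
    \<le> d * l1_norm ((translate_plus i j ^^ Suc m) (translate_minus i j (W q U xs)))
      + (1 - 2 * d) * l1_norm ((translate_plus i j ^^ m) (translate_minus i j (W q U xs)))"
proof -
  let ?G = "(translate_plus i j ^^ m) (translate_minus i j (W q U xs))"
  define r where "r y = U a y - (if y \<in> {i, j} then d else 0)" for y
  have fin_supp_G: "fin_supp ?G"
    by (intro fin_supp_funpow_translate_plus fin_supp_translate_minus fin_supp_W)
  have r_nonneg: "0 \<le> r y" if "y \<in> {1..q}" for y
    using nonneg[OF a that] d by (auto simp: r_def)
  have "(\<Sum>y\<in>{1..q}. r y) = (\<Sum>y\<in>{1..q}. U a y) - (\<Sum>y\<in>{1..q}. if y \<in> {i, j} then d else 0)"
    unfolding r_def by (rule sum_subtractf)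
  also have "(\<Sum>y\<in>{1..q}. if y \<in> {i, j} then d else 0) = (\<Sum>y\<in>{i, j}. d)"
    using ij by (intro sum.mono_neutral_cong_right) auto
  finally have r_sum: "(\<Sum>y\<in>{1..q}. r y) = 1 - 2 * d"
    using row_sum[OF a] ij by simp
  have "(translate_plus i j ^^ m) (translate_minus i j (W q U (xs @ [a])))
      = (\<lambda>x. d * translate_plus i j ?G x + mix {1..q} r ?G x)"
    unfolding W_snoc translate_minus_mix funpow_translate_plus_mix r_def
    using ij by (intro ext mix_split_pair) auto
  then have "l1_norm ((translate_plus i j ^^ m) (translate_minus i j (W q U (xs @ [a]))))
      \<le> l1_norm (\<lambda>x. d * translate_plus i j ?G x) + l1_norm (mix {1..q} r ?G)"
    using fin_supp_G
    by (simp add: l1_norm_add_le fin_supp_scale fin_supp_translate_plus fin_supp_mix)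
  also have "\<dots> \<le> d * l1_norm (translate_plus i j ?G) + (\<Sum>y\<in>{1..q}. \<bar>r y\<bar>) * l1_norm ?G"
    using d fin_supp_G by (simp add: l1_norm_scale l1_norm_mix_le)
  also have "(\<Sum>y\<in>{1..q}. \<bar>r y\<bar>) = 1 - 2 * d"
    using r_nonneg r_sum by simp
  finally show ?thesis
    by simp
qed

lemma l1_norm_translate_minus_W_le:
  assumes ij: "i \<in> {1..q}" "j \<in> {1..q}" "i \<noteq> j"
    and d: "0 < d" "\<And>a. a \<in> {1..q} \<Longrightarrow> d \<le> U a i" "\<And>a. a \<in> {1..q} \<Longrightarrow> d \<le> U a j"
    and xs: "set xs \<subseteq> {1..q}"
  shows "l1_norm (translate_minus i j (W q U xs)) \<le> 2 / sqrt (real (Suc (length xs)) * (2 * d))"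
proof -
  let ?n = "length xs"
  let ?w = "\<lambda>l. real (?n choose l) * (2 * d) ^ l * (1 - 2 * d) ^ (?n - l)"
  have "(\<Sum>c\<in>{i, j}. U i c) \<le> (\<Sum>c\<in>{1..q}. U i c)"
    using ij nonneg by (intro sum_mono2) auto
  then have "2 * d \<le> 1"
    using ij d row_sum[of i] by fastforce
  let ?F = "\<lambda>xs m. l1_norm ((translate_plus i j ^^ m) (translate_minus i j (W q U xs)))"
  have "?F xs 0 \<le> (\<Sum>l\<le>?n. real (?n choose l) * d ^ l * (1 - 2 * d) ^ (?n - l) * ?F [] (0 + l))"
  proof (rule binomial_recurrence_bound[OF _ _ _ xs])
    fix ys a m assume "a \<in> {1..q}"
    then show "?F (ys @ [a]) m \<le> d * ?F ys (Suc m) + (1 - 2 * d) * ?F ys m"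
      using l1_norm_translate_minus_W_snoc_le[OF ij] d by simp
  qed (use d \<open>2 * d \<le> 1\<close> in auto)
  then have "l1_norm (translate_minus i j (W q U xs))
      \<le> (\<Sum>l\<le>?n. real (?n choose l) * d ^ l * (1 - 2 * d) ^ (?n - l)
            * l1_norm ((translate_plus i j ^^ l) (translate_minus i j delta0)))"
    by (simp add: W_Nil)
  also have "\<dots> \<le> (\<Sum>l\<le>?n. real (?n choose l) * d ^ l * (1 - 2 * d) ^ (?n - l)
            * (2 ^ Suc l / sqrt (Suc l)))"
    using \<open>2 * d \<le> 1\<close> d(1)
    by (intro sum_mono mult_left_mono l1_norm_funpow_translate_plus_minus_delta0_le) auto
  also have "\<dots> = 2 * (\<Sum>l\<le>?n. ?w l / sqrt (Suc l))"
    unfolding sum_distrib_left by (rule sum.cong) (simp_all add: power_mult_distrib)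
  also have "\<dots> \<le> 2 / sqrt (real (Suc ?n) * (2 * d))"
    using sum_binomial_weights_div_sqrt[of "2 * d" ?n] \<open>2 * d \<le> 1\<close> d(1) by simp
  finally show ?thesis
    by simp
qed

lemma dTV_W_snoc_le:
  assumes d: "0 < d" "\<And>a c. a \<in> {1..q} \<Longrightarrow> c \<in> {1..q} \<Longrightarrow> d \<le> U a c"
    and xs: "set xs \<subseteq> {1..q}" and ab: "a \<in> {1..q}" "b \<in> {1..q}"
  shows "dTV_W q U (xs @ [a]) (xs @ [b]) \<le> 2 / sqrt (real (Suc (length xs)) * (2 * d))"
proof -
  let ?B = "2 / sqrt (real (Suc (length xs)) * (2 * d))"
  have "(\<Sum>y\<in>{1..q}. U a y - U b y) = 0"
    using row_sum ab by (simp add: sum_subtractf)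
  then have "(\<lambda>x. W q U (xs @ [a]) x - W q U (xs @ [b]) x)
      = (\<lambda>x. \<Sum>y\<in>{1..q}. (U a y - U b y) * translate_minus y 1 (W q U xs) x)"
    unfolding W_snoc mix_weights_diff by (rule mix_zero_sum)
  then have "2 * dTV_W q U (xs @ [a]) (xs @ [b])
      \<le> (\<Sum>y\<in>{1..q}. l1_norm (\<lambda>x. (U a y - U b y) * translate_minus y 1 (W q U xs) x))"
    by (simp add: dTV_W_eq_l1_norm l1_norm_sum_le fin_supp_scale fin_supp_translate_minus fin_supp_W)
  also have "\<dots> \<le> (\<Sum>y\<in>{1..q}. (U a y + U b y) * ?B)"
  proof (rule sum_mono)
    fix y assume y: "y \<in> {1..q}"
    have "l1_norm (translate_minus y 1 (W q U xs)) \<le> ?B"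
    proof (cases "y = 1")
      case True
      then show ?thesis using d(1) by (simp add: translate_minus_def)
    next
      case False
      then show ?thesis
        using y ab d xs by (intro l1_norm_translate_minus_W_le) auto
    qed
    moreover have "\<bar>U a y - U b y\<bar> \<le> U a y + U b y"
      using nonneg[OF ab(1) y] nonneg[OF ab(2) y] unfolding abs_le_iff by linarith
    ultimately show "l1_norm (\<lambda>x. (U a y - U b y) * translate_minus y 1 (W q U xs) x)
        \<le> (U a y + U b y) * ?B"
      unfolding l1_norm_scale by (intro mult_mono) (auto simp: l1_norm_nonneg)
  qed
  also have "\<dots> = ((\<Sum>y\<in>{1..q}. U a y) + (\<Sum>y\<in>{1..q}. U b y)) * ?B"
    unfolding sum.distrib[symmetric] sum_distrib_right ..
  also have "\<dots> = 2 * ?B"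
    using row_sum ab by simp
  finally show ?thesis
    by simp
qed

end

theorem lemma4:
  fixes q :: nat and U :: "nat \<Rightarrow> nat \<Rightarrow> real"
  assumes "q \<ge> 2"
    and "\<And>i j. i \<in> {1..q} \<Longrightarrow> j \<in> {1..q} \<Longrightarrow> U i j > 0"
    and "\<And>i. i \<in> {1..q} \<Longrightarrow> (\<Sum>j=1..q. U i j) = 1"
  shows "\<exists>C3::real. \<exists>N::nat. \<forall>n\<ge>N. \<forall>xs \<in> words q n. \<forall>a\<in>{1..q}. \<forall>b\<in>{1..q}. a \<noteq> b \<longrightarrow>
           dTV_W q U (xs @ [a]) (xs @ [b]) \<le> C3 * (log 2 (real n)) powr ((real q - 2) / 2) / sqrt (real n)"
proof -
  obtain d where d: "0 < d" "\<And>a c. a \<in> {1..q} \<Longrightarrow> c \<in> {1..q} \<Longrightarrow> d \<le> U a c"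
  proof
    let ?S = "case_prod U ` ({1..q} \<times> {1..q})"
    show "0 < Min ?S"
      using assms(1,2) by (subst Min_gr_iff) auto
    show "Min ?S \<le> U a c" if "a \<in> {1..q}" "c \<in> {1..q}" for a c
      using that by (intro Min_le) auto
  qed
  interpret channel q U
    using assms(2,3) by unfold_locales (auto intro: less_imp_le)
  let ?C = "2 / sqrt (2 * d)"
  have "dTV_W q U (xs @ [a]) (xs @ [b]) \<le> ?C * (log 2 (real n)) powr ((real q - 2) / 2) / sqrt (real n)"
    if n: "2 \<le> n" and xs: "xs \<in> words q n" and ab: "a \<in> {1..q}" "b \<in> {1..q}" for n xs a b
  proof -
    have "dTV_W q U (xs @ [a]) (xs @ [b]) \<le> 2 / sqrt (real (Suc n) * (2 * d))"
      using dTV_W_snoc_le[OF d _ ab, of xs] xs by (auto simp: words_def)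
    also have "\<dots> \<le> 2 / sqrt (real n * (2 * d))"
      using n d(1) by (intro divide_left_mono real_sqrt_le_mono mult_right_mono mult_pos_pos) auto
    also have "\<dots> = ?C * 1 / sqrt (real n)"
      by (simp add: real_sqrt_mult)
    also have "\<dots> \<le> ?C * (log 2 (real n)) powr ((real q - 2) / 2) / sqrt (real n)"
      using n assms(1) d(1) by (intro divide_right_mono mult_left_mono ge_one_powr_ge_zero) auto
    finally show ?thesis .
  qed
  then show ?thesis
    by blast
qed

end
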